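(* Let $0=t_0<t_1<\dots<t_n=1$ be a grid. Consider the following random procedure. 1. Draw $X_{t_n}\sim p_{t_n}$ and $\boldsymbol\tau_{t_n}\sim j_{t_n}(\cdot\mid X_{t_n})$. 2. For $i=n-1,\dots,0$: - draw $X_0'\sim p_{0|t_{i+1}}(\cdot\mid X_{t_{i+1}},\boldsymbol\tau_{t_{i+1}})$ (equivalently, from the masked-diffusion denoiser evaluated at $\tilde{\mathbf x}_{t_{i+1}}(\boldsymbol\tau_{t_{i+1}})$); - draw $X_{t_i}\sim q_{t_i|0,t_{i+1}}(\cdot\mid X_0',X_{t_{i+1}})$ (the UDM bridge; for $t_i=0$ this means $X_{t_0}=X_0'$); - draw $\boldsymbol\tau_{t_i}\sim j_{t_i|0}(\cdot\mid X_0',X_{t_i})$. Then the law of $(X_{t_0},\dots,X_{t_n})$ is the UDM reverse-chain law $$p_{t_n}(\mathbf x_{t_n})\prod_{i=1}^np_{t_{i-1}|t_i}(\mathbf x_{t_{i-1}}\mid\mathbf x_{t_i}).$$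
   Context: **UDM setup.** - Let $K\ge2$, $L\ge1$ and $\mathsf V=\{1,\dots,K\}$. Tokens are identified with the standard basis vectors of $\mathbb R^K$, and $\mathbf 1$ is the all-ones vector. - $\mathsf X=\mathsf V^L$. $p_0$ is a distribution on $\mathsf X$. - The schedule $\alpha:[0,1]\to[0,1]$ is continuously differentiable and strictly decreasing, with $\alpha_0=1$ and $\alpha_1=0$. Set $\alpha_{t|s}=\alpha_t/\alpha_s$. - UDM forward kernel: $q_{t|s}(\mathbf x_t\mid\mathbf x_s)=\prod_\ell\langle\mathbf x_t^\ell,\alpha_{t|s}\mathbf x_s^\ell+(1-\alpha_{t|s})\mathbf 1/K\rangle$. - $p_t(\mathbf x)=\sum_{\mathbf x_0}p_0(\mathbf x_0)q_{t|0}(\mathbf x\mid\mathbf x_0)$. - UDM reverse kernel: $p_{s|t}(\mathbf x_s\mid\mathbf x_t)=p_s(\mathbf x_s)q_{t|s}(\mathbf x_t\mid\mathbf x_s)/p_t(\mathbf x_t)$. - UDM bridge: $q_{s|0,t}(\mathbf x_s\mid\mathbf x_0,\mathbf x_t)=q_{t|s}(\mathbf x_t\mid\mathbf x_s)q_{s|0}(\mathbf x_s\mid\mathbf x_0)/q_{t|0}(\mathbf x_t\mid\mathbf x_0)$ for $s>0$, and $q_{0|0,t}(\mathbf x\mid\mathbf x_0,\mathbf x_t)=\mathbf 1\{\mathbf x=\mathbf x_0\}$. **Transition times.** - $\boldsymbol\tau\in[0,1]^L$ has density $j(\boldsymbol\tau)=\prod_\ell(-\alpha'_{\boldsymbol\tau^\ell})$,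 i.e. its coordinates are i.i.d. with $\mathbb P(\boldsymbol\tau^\ell<t)=1-\alpha_t$. - $q_{t|0}(\mathbf x_t\mid\mathbf x_0,\boldsymbol\tau)=\prod_\ell\mathrm{Cat}\big(\mathbf x_t^\ell;\mathbf 1\{\boldsymbol\tau^\ell>t\}\mathbf x_0^\ell+\mathbf 1\{\boldsymbol\tau^\ell\le t\}\mathbf 1/K\big)$. - Joint forward law: $X_0\sim p_0$ and $\boldsymbol\tau\sim j$ independent, and $X_t\mid(X_0,\boldsymbol\tau)\sim q_{t|0}(\cdot\mid X_0,\boldsymbol\tau)$. The marginal of $X_t$ is $p_t$. - $j_t(\cdot\mid\mathbf x_t)$ is the conditional density of $\boldsymbol\tau$ given $X_t=\mathbf x_t$. - $p_{0|t}(\mathbf x_0\mid\mathbf x_t,\boldsymbol\tau)\propto p_0(\mathbf x_0)q_{t|0}(\mathbf x_t\mid\mathbf x_0,\boldsymbol\tau)$ is the conditional law of $X_0$ given $(X_t,\boldsymbol\tau)$. - Masked sequence: $\tilde{\mathbf x}_t(\boldsymbol\tau)^\ell=\mathbf x_t^\ell$ if $\boldsymbol\tau^\ell>t$, and equals a mask symbol otherwise. **Resampling density.** - $j_{s|0}(\boldsymbol\tau_s\mid\mathbf x_0,\mathbf x_s):=j(\boldsymbol\tau_s)q_{s|0}(\mathbf x_s\mid\mathbf x_0,\boldsymbol\tau_s)/q_{s|0}(\mathbf x_s\mid\mathbf x_0)$. - Explicitly it is the product over $\ell$ of: - $\frac{-\alpha'_{\boldsymbol\tau_s^\ell}}{1-\alpha_s}\mathbf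 1\{\boldsymbol\tau_s^\ell\le s\}$ if $\mathbf x_s^\ell\ne\mathbf x_0^\ell$; - $\frac{-\alpha'_{\boldsymbol\tau_s^\ell}}{1+(K-1)\alpha_s}\big(\mathbf 1\{\boldsymbol\tau_s^\ell\le s\}+K\mathbf 1\{\boldsymbol\tau_s^\ell>s\}\big)$ if $\mathbf x_s^\ell=\mathbf x_0^\ell$. *)

theory Defs
  imports "HOL-Probability.Probability"
begin

text \<open>Tokens are 1..K (identified with standard basis vectors of R^K); a sequence
 in X = V^L is a function nat => nat that is restricted to positions {..<L}.
 Transition-time vectors are functions nat => real (positions {..<L}).\<close>

definition XS :: "nat \<Rightarrow> nat \<Rightarrow> (nat \<Rightarrow> nat) set" where
  "XS K L = PiE {..<L} (\<lambda>_. {1..K})"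

text \<open>cat K a u v = < e_u , a e_v + (1 - a) 1/K >\<close>
definition cat :: "nat \<Rightarrow> real \<Rightarrow> nat \<Rightarrow> nat \<Rightarrow> real" where
  "cat K a u v = a * (if u = v then 1 else 0) + (1 - a) / real K"

definition qf :: "nat \<Rightarrow> nat \<Rightarrow> (real \<Rightarrow> real) \<Rightarrow> real \<Rightarrow> real
    \<Rightarrow> (nat \<Rightarrow> nat) \<Rightarrow> (nat \<Rightarrow> nat) \<Rightarrow> real" where
  "qf K L \<alpha> t s xt xs = (\<Prod>l<L. cat K (\<alpha> t / \<alpha> s) (xt l) (xs l))"

definition pmarg :: "nat \<Rightarrow> nat \<Rightarrow> ((nat \<Rightarrow> nat) \<Rightarrow> real) \<Rightarrow> (real \<Rightarrow> real) \<Rightarrow> real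
    \<Rightarrow> (nat \<Rightarrow> nat) \<Rightarrow> real" where
  "pmarg K L p0 \<alpha> t x = (\<Sum>x0\<in>XS K L. p0 x0 * qf K L \<alpha> t 0 x x0)"

definition prev :: "nat \<Rightarrow> nat \<Rightarrow> ((nat \<Rightarrow> nat) \<Rightarrow> real) \<Rightarrow> (real \<Rightarrow> real) \<Rightarrow> real \<Rightarrow> real
    \<Rightarrow> (nat \<Rightarrow> nat) \<Rightarrow> (nat \<Rightarrow> nat) \<Rightarrow> real" where
  "prev K L p0 \<alpha> s t xs xt =
     pmarg K L p0 \<alpha> s xs * qf K L \<alpha> t s xt xs / pmarg K L p0 \<alpha> t xt"

definition bridge :: "nat \<Rightarrow> nat \<Rightarrow> (real \<Rightarrow> real) \<Rightarrow> real \<Rightarrow> real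
    \<Rightarrow> (nat \<Rightarrow> nat) \<Rightarrow> (nat \<Rightarrow> nat) \<Rightarrow> (nat \<Rightarrow> nat) \<Rightarrow> real" where
  "bridge K L \<alpha> s t x0 xt xs =
     (if s = 0 then (if xs = x0 then 1 else 0)
      else qf K L \<alpha> t s xt xs * qf K L \<alpha> s 0 xs x0 / qf K L \<alpha> t 0 xt x0)"

text \<open>density j of the transition times on [0,1]^L (w.r.t. Lebesgue measure)\<close>
definition jden :: "nat \<Rightarrow> (real \<Rightarrow> real) \<Rightarrow> (nat \<Rightarrow> real) \<Rightarrow> real" where
  "jden L \<alpha>' \<tau> = (\<Prod>l<L. (- \<alpha>' (\<tau> l)) * indicator {0..1} (\<tau> l))"

definition qtau :: "nat \<Rightarrow> nat \<Rightarrow> real \<Rightarrow> (nat \<Rightarrow> nat) \<Rightarrow> (nat \<Rightarrow> nat) \<Rightarrow> (nat \<Rightarrow> real) \<Rightarrow> real" where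
  "qtau K L t x x0 \<tau> = (\<Prod>l<L. cat K (if \<tau> l > t then 1 else 0) (x l) (x0 l))"

text \<open>j_t(tau | x): conditional density of tau given X_t = x (Bayes)\<close>
definition jcond :: "nat \<Rightarrow> nat \<Rightarrow> ((nat \<Rightarrow> nat) \<Rightarrow> real) \<Rightarrow> (real \<Rightarrow> real) \<Rightarrow> (real \<Rightarrow> real)
    \<Rightarrow> real \<Rightarrow> (nat \<Rightarrow> nat) \<Rightarrow> (nat \<Rightarrow> real) \<Rightarrow> real" where
  "jcond K L p0 \<alpha> \<alpha>' t x \<tau> =
     jden L \<alpha>' \<tau> * (\<Sum>x0\<in>XS K L. p0 x0 * qtau K L t x x0 \<tau>) / pmarg K L p0 \<alpha> t x"

definition p0cond :: "nat \<Rightarrow> nat \<Rightarrow> ((nat \<Rightarrow> nat) \<Rightarrow> real) \<Rightarrow> real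
    \<Rightarrow> (nat \<Rightarrow> nat) \<Rightarrow> (nat \<Rightarrow> real) \<Rightarrow> (nat \<Rightarrow> nat) \<Rightarrow> real" where
  "p0cond K L p0 t x \<tau> x0 =
     p0 x0 * qtau K L t x x0 \<tau> / (\<Sum>y\<in>XS K L. p0 y * qtau K L t x y \<tau>)"

definition jres :: "nat \<Rightarrow> nat \<Rightarrow> (real \<Rightarrow> real) \<Rightarrow> (real \<Rightarrow> real) \<Rightarrow> real
    \<Rightarrow> (nat \<Rightarrow> nat) \<Rightarrow> (nat \<Rightarrow> nat) \<Rightarrow> (nat \<Rightarrow> real) \<Rightarrow> real" where
  "jres K L \<alpha> \<alpha>' s x0 xs \<tau> = jden L \<alpha>' \<tau> * qtau K L s xs x0 \<tau> / qf K L \<alpha> s 0 xs x0"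

definition lebL :: "nat \<Rightarrow> (nat \<Rightarrow> real) measure" where
  "lebL L = PiM {..<L} (\<lambda>_. lborel)"

text \<open>run ... tg i x tau: starting from state (X_{t_i}, tau_{t_i}) = (x, tau), performs the
 loop iterations i-1, ..., 0 and returns the list [X_{t_0}, ..., X_{t_i}].\<close>
primrec run :: "nat \<Rightarrow> nat \<Rightarrow> ((nat \<Rightarrow> nat) \<Rightarrow> real) \<Rightarrow> (real \<Rightarrow> real) \<Rightarrow> (real \<Rightarrow> real)
    \<Rightarrow> (nat \<Rightarrow> real) \<Rightarrow> nat \<Rightarrow> (nat \<Rightarrow> nat) \<Rightarrow> (nat \<Rightarrow> real) \<Rightarrow> (nat \<Rightarrow> nat) list measure" where
  "run K L p0 \<alpha> \<alpha>' tg 0 x \<tau> = return (count_space UNIV) [x]"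
| "run K L p0 \<alpha> \<alpha>' tg (Suc i) x \<tau> =
     bind (density (count_space (XS K L)) (\<lambda>y. ennreal (p0cond K L p0 (tg (Suc i)) x \<tau> y))) (\<lambda>y.
     bind (density (count_space (XS K L)) (\<lambda>z. ennreal (bridge K L \<alpha> (tg i) (tg (Suc i)) y x z))) (\<lambda>z.
     bind (density (lebL L) (\<lambda>\<tau>'. ennreal (jres K L \<alpha> \<alpha>' (tg i) y z \<tau>'))) (\<lambda>\<tau>'.
     distr (run K L p0 \<alpha> \<alpha>' tg i z \<tau>') (count_space UNIV) (\<lambda>l. l @ [x]))))"

definition proc :: "nat \<Rightarrow> nat \<Rightarrow> ((nat \<Rightarrow> nat) \<Rightarrow> real) \<Rightarrow> (real \<Rightarrow> real) \<Rightarrow> (real \<Rightarrow> real)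
    \<Rightarrow> (nat \<Rightarrow> real) \<Rightarrow> nat \<Rightarrow> (nat \<Rightarrow> nat) list measure" where
  "proc K L p0 \<alpha> \<alpha>' tg n =
     bind (density (count_space (XS K L)) (\<lambda>x. ennreal (pmarg K L p0 \<alpha> (tg n) x))) (\<lambda>x.
     bind (density (lebL L) (\<lambda>\<tau>. ennreal (jcond K L p0 \<alpha> \<alpha>' (tg n) x \<tau>))) (\<lambda>\<tau>.
     run K L p0 \<alpha> \<alpha>' tg n x \<tau>))"

definition revlaw :: "nat \<Rightarrow> nat \<Rightarrow> ((nat \<Rightarrow> nat) \<Rightarrow> real) \<Rightarrow> (real \<Rightarrow> real)
    \<Rightarrow> (nat \<Rightarrow> real) \<Rightarrow> nat \<Rightarrow> (nat \<Rightarrow> nat) list measure" where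
  "revlaw K L p0 \<alpha> tg n = density (count_space UNIV) (\<lambda>xs.
     if length xs = Suc n \<and> set xs \<subseteq> XS K L
     then ennreal (pmarg K L p0 \<alpha> (tg n) (xs ! n) *
            (\<Prod>i\<in>{1..n}. prev K L p0 \<alpha> (tg (i - 1)) (tg i) (xs ! (i - 1)) (xs ! i)))
     else 0)"

end

theory Submission
  imports Defs
begin

(* Write V_t(x, tau) for the density of the forward pair (X_t, tau). The denoising draw
   y ~ p_{0|t}(. | x, tau) is the Bayes posterior of X_0, so drawing it against V_t(x, .) and
   integrating tau out gives the joint law p_0(y) q_{t|0}(x | y) of (X_0, X_t). The bridge turns
   this into p_0(y) q_{s|0}(z | y) q_{t|s}(x | z), and the resampling density j_{s|0}(. | y, z)
   restores the forward law of tau given (X_0, X_s) = (y, z); summing out y, the new state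
   (X_s, tau_s) again has density V_s(z, .), now weighted by q_{t|s}(x | z). Since
   p_t(x) p_{s|t}(z | x) = p_s(z) q_{t|s}(x | z), backward induction over the grid shows that a run
   started from V_{t_i}(x, .) produces p_{t_i}(x) times the product of the reverse kernels. At
   t_n = 1 the initial draw X ~ p_1, tau ~ j_1(. | X) has exactly the density V_1. *)

section \<open>Finitely supported discrete kernels\<close>

text \<open>Each step of the procedure has a finitely supported density on lists of states, so its nested
  binds reduce to finite sums of integrals of densities.\<close>

definition finite_subprob_density :: "'a measure \<Rightarrow> 'a set \<Rightarrow> ('a \<Rightarrow> ennreal) \<Rightarrow> bool" where
  "finite_subprob_density \<mu> S f \<longleftrightarrow>
     \<mu> = density (count_space UNIV) f \<and> subprob_space \<mu> \<and> finite S \<and> (\<forall>a. a \<notin> S \<longrightarrow> f a = 0)"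

lemma emeasure_density_count_space_finite_support:
  assumes "finite S" and "\<And>a. a \<notin> S \<Longrightarrow> f a = 0"
  shows "emeasure (density (count_space UNIV) f) A = (\<Sum>a\<in>A \<inter> S. f a)"
proof -
  have "emeasure (density (count_space UNIV) f) A = (\<integral>\<^sup>+a. f a * indicator A a \<partial>count_space UNIV)"
    by (rule emeasure_density) auto
  also have "\<dots> = (\<Sum>a\<in>A \<inter> S. f a * indicator A a)"
    by (rule nn_integral_count_space') (use assms in auto)
  also have "\<dots> = (\<Sum>a\<in>A \<inter> S. f a)"
    by (intro sum.cong) auto
  finally show ?thesis .
qed

lemma emeasure_finite_subprob_density:
  assumes "finite_subprob_density \<mu> S f"
  shows "emeasure \<mu> A = (\<Sum>a\<in>A \<inter> S. f a)"
  using assms emeasure_density_count_space_finite_support[of S f A]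
  unfolding finite_subprob_density_def by auto

lemma finite_subprob_density_mono:
  assumes "finite_subprob_density \<mu> S f" and "S \<subseteq> T" and "finite T"
  shows "finite_subprob_density \<mu> T f"
  using assms unfolding finite_subprob_density_def by blast

lemma finite_subprob_density_return:
  "finite_subprob_density (return (count_space UNIV) x) {x} (\<lambda>a. if a = x then 1 else 0)"
proof -
  have "return (count_space UNIV) x = density (count_space UNIV) (\<lambda>a. if a = x then 1 else 0)"
  proof (rule measure_eqI)
    fix A :: "'a set"
    show "emeasure (return (count_space UNIV) x) A =
        emeasure (density (count_space UNIV) (\<lambda>a. if a = x then 1 else 0)) A"
      by (subst emeasure_density_count_space_finite_support[of "{x}"]) (auto simp: indicator_def)
  qed simp
  moreover have "subprob_space (return (count_space UNIV) x)"
    by (simp add: prob_space_return prob_space_imp_subprob_space)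
  ultimately show ?thesis
    unfolding finite_subprob_density_def by simp
qed

lemma finite_subprob_density_distr_snoc:
  assumes f: "finite_subprob_density \<mu> S f"
  shows "finite_subprob_density (distr \<mu> (count_space UNIV) (\<lambda>l. l @ [x])) ((\<lambda>l. l @ [x]) ` S)
    (\<lambda>a. if a \<noteq> [] \<and> last a = x then f (butlast a) else 0)"
proof -
  let ?h = "\<lambda>l. l @ [x]" and ?g = "\<lambda>a. if a \<noteq> [] \<and> last a = x then f (butlast a) else 0"
  have \<mu>: "\<mu> = density (count_space UNIV) f" and S: "finite S" and supp: "\<And>a. a \<notin> S \<Longrightarrow> f a = 0"
    and sub: "subprob_space \<mu>"
    using f unfolding finite_subprob_density_def by auto
  have g_supp: "?g a = 0" if "a \<notin> ?h ` S" for a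
  proof (cases "a \<noteq> [] \<and> last a = x")
    case True
    then have "a = ?h (butlast a)" by (metis append_butlast_last_id)
    then show ?thesis using that supp by force
  qed auto
  have "distr \<mu> (count_space UNIV) ?h = density (count_space UNIV) ?g"
  proof (rule measure_eqI)
    fix A
    have "emeasure (distr \<mu> (count_space UNIV) ?h) A = (\<Sum>a\<in>?h -` A \<inter> S. f a)"
      using emeasure_finite_subprob_density[OF f] by (subst emeasure_distr) (auto simp: \<mu>)
    also have "\<dots> = (\<Sum>b\<in>?h ` (?h -` A \<inter> S). ?g b)"
      by (subst sum.reindex) (auto simp: inj_on_def)
    also have "?h ` (?h -` A \<inter> S) = A \<inter> ?h ` S" by auto
    also have "(\<Sum>b\<in>A \<inter> ?h ` S. ?g b) = emeasure (density (count_space UNIV) ?g) A"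
      by (rule emeasure_density_count_space_finite_support[OF finite_imageI[OF S] g_supp, symmetric])
    finally show "emeasure (distr \<mu> (count_space UNIV) ?h) A = emeasure (density (count_space UNIV) ?g) A" .
  qed simp
  moreover have "subprob_space (distr \<mu> (count_space UNIV) ?h)"
    using sub by (rule subprob_space.subprob_space_distr) (simp_all add: \<mu>)
  ultimately show ?thesis
    unfolding finite_subprob_density_def using S g_supp by simp
qed

lemma measurable_finite_subprob_density_kernel:
  assumes N: "\<And>x. x \<in> space M \<Longrightarrow> finite_subprob_density (N x) S (g x)"
    and g: "\<And>a. (\<lambda>x. g x a) \<in> borel_measurable M"
  shows "N \<in> M \<rightarrow>\<^sub>M subprob_algebra (count_space UNIV)"
proof (rule measurable_subprob_algebra)
  fix x assume "x \<in> space M"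
  with N show "subprob_space (N x)" and "sets (N x) = sets (count_space UNIV)"
    unfolding finite_subprob_density_def by (blast, simp)
next
  fix A
  have "(\<lambda>x. \<Sum>a\<in>A \<inter> S. g x a) \<in> borel_measurable M" using g by measurable
  then show "(\<lambda>x. emeasure (N x) A) \<in> borel_measurable M"
    by (rule measurable_cong[THEN iffD1, rotated]) (simp add: emeasure_finite_subprob_density[OF N])
qed

lemma bind_finite_subprob_density_eq:
  assumes M: "space M \<noteq> {}"
    and N: "\<And>x. x \<in> space M \<Longrightarrow> finite_subprob_density (N x) S (g x)"
    and g: "\<And>a. (\<lambda>x. g x a) \<in> borel_measurable M"
  shows "bind M N = density (count_space UNIV) (\<lambda>a. \<integral>\<^sup>+x. g x a \<partial>M)"
proof (rule measure_eqI)
  obtain x0 where "x0 \<in> space M" using M by blast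
  then have S: "finite S" using N unfolding finite_subprob_density_def by blast
  have supp: "\<And>x a. x \<in> space M \<Longrightarrow> a \<notin> S \<Longrightarrow> g x a = 0"
    and dens: "\<And>x. x \<in> space M \<Longrightarrow> N x = density (count_space UNIV) (g x)"
    using N unfolding finite_subprob_density_def by auto
  show "sets (bind M N) = sets (density (count_space UNIV) (\<lambda>a. \<integral>\<^sup>+x. g x a \<partial>M))"
    using M dens by (subst sets_bind) auto
  fix A
  have "emeasure (bind M N) A = (\<integral>\<^sup>+x. emeasure (N x) A \<partial>M)"
    using emeasure_bind[OF M measurable_finite_subprob_density_kernel[OF N g], of A] by simp
  also have "\<dots> = (\<integral>\<^sup>+x. (\<Sum>a\<in>A \<inter> S. g x a) \<partial>M)"
    by (intro nn_integral_cong) (simp add: emeasure_finite_subprob_density[OF N])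
  also have "\<dots> = (\<Sum>a\<in>A \<inter> S. \<integral>\<^sup>+x. g x a \<partial>M)"
    by (rule nn_integral_sum) (use g in auto)
  also have "\<dots> = emeasure (density (count_space UNIV) (\<lambda>a. \<integral>\<^sup>+x. g x a \<partial>M)) A"
    by (rule emeasure_density_count_space_finite_support[OF S, symmetric])
       (simp add: supp nn_integral_cong[of M _ "\<lambda>_. 0"] cong: nn_integral_cong)
  finally show "emeasure (bind M N) A = emeasure (density (count_space UNIV) (\<lambda>a. \<integral>\<^sup>+x. g x a \<partial>M)) A" .
qed

lemma finite_subprob_density_bind:
  assumes M: "subprob_space M"
    and N: "\<And>x. x \<in> space M \<Longrightarrow> finite_subprob_density (N x) S (g x)"
    and g: "\<And>a. (\<lambda>x. g x a) \<in> borel_measurable M"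
  shows "finite_subprob_density (bind M N) S (\<lambda>a. \<integral>\<^sup>+x. g x a \<partial>M)"
proof -
  have ne: "space M \<noteq> {}" using M by (rule subprob_space.subprob_not_empty)
  then obtain x0 where "x0 \<in> space M" by blast
  then have S: "finite S" using N unfolding finite_subprob_density_def by blast
  have "(\<integral>\<^sup>+x. g x a \<partial>M) = 0" if "a \<notin> S" for a
    using N that unfolding finite_subprob_density_def by (simp cong: nn_integral_cong)
  then show ?thesis
    using bind_finite_subprob_density_eq[OF ne N g] S
      subprob_space_bind[OF M measurable_finite_subprob_density_kernel[OF N g]]
    unfolding finite_subprob_density_def by simp
qed

lemma nn_integral_density_count_space_finite:
  assumes "finite A"
  shows "(\<integral>\<^sup>+y. g y \<partial>density (count_space A) (\<lambda>y. ennreal (f y))) = (\<Sum>y\<in>A. ennreal (f y) * g y)"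
  by (subst nn_integral_density) (simp_all add: nn_integral_count_space_finite[OF assms])

lemma subprob_space_density_count_space:
  assumes "finite A" "A \<noteq> {}" and "\<And>y. y \<in> A \<Longrightarrow> 0 \<le> f y" and "(\<Sum>y\<in>A. f y) \<le> 1"
  shows "subprob_space (density (count_space A) (\<lambda>y. ennreal (f y)))"
proof (rule subprob_spaceI)
  have "emeasure (density (count_space A) (\<lambda>y. ennreal (f y))) A = (\<Sum>y\<in>A. ennreal (f y))"
    by (simp add: emeasure_density nn_integral_count_space_finite[OF assms(1)])
  also have "\<dots> = ennreal (\<Sum>y\<in>A. f y)" using assms(3) by (rule sum_ennreal)
  also have "\<dots> \<le> 1" using assms(4) by simp
  finally show "emeasure (density (count_space A) (\<lambda>y. ennreal (f y)))
      (space (density (count_space A) (\<lambda>y. ennreal (f y)))) \<le> 1" by simp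
qed (use assms in simp)

section \<open>The uniform-noise kernels\<close>

lemma cat_nonneg: "0 \<le> a \<Longrightarrow> a \<le> 1 \<Longrightarrow> 0 \<le> cat K a u v"
  unfolding cat_def by auto

lemma cat_pos: "0 < K \<Longrightarrow> 0 \<le> a \<Longrightarrow> a < 1 \<Longrightarrow> 0 < cat K a u v"
  unfolding cat_def by (auto intro: add_nonneg_pos)

lemma cat_1: "cat K 1 u v = (if u = v then 1 else 0)"
  unfolding cat_def by simp

lemma sum_cat_mult:
  assumes u: "u \<in> {1..K}" and w: "w \<in> {1..K}"
  shows "(\<Sum>v\<in>{1..K}. cat K a u v * cat K b v w) = cat K (a * b) u w"
proof -
  define c where "c = (1 - a) / real K"
  define d where "d = (1 - b) / real K"
  have eq: "cat K a u v * cat K b v w =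
      (if u = v then a * b * (if v = w then 1 else 0) + a * d else 0)
      + (if v = w then c * b else 0) + c * d" for v
    unfolding cat_def c_def[symmetric] d_def[symmetric] by (auto simp: algebra_simps)
  have "(\<Sum>v\<in>{1..K}. cat K a u v * cat K b v w) =
      (\<Sum>v\<in>{1..K}. if u = v then a * b * (if v = w then 1 else 0) + a * d else 0)
      + (\<Sum>v\<in>{1..K}. if v = w then c * b else 0) + (\<Sum>v\<in>{1..K}. c * d)"
    unfolding eq sum.distrib ..
  also have "\<dots> = (a * b * (if u = w then 1 else 0) + a * d) + c * b + real K * (c * d)"
    using u w by (simp only: sum.delta sum.delta' sum_constant if_True) simp
  also have "\<dots> = cat K (a * b) u w"
    using u unfolding cat_def c_def d_def by (simp add: field_simps)
  finally show ?thesis .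
qed

lemma qtau_nonneg: "0 \<le> qtau K L t x y \<tau>"
  unfolding qtau_def by (auto intro!: prod_nonneg cat_nonneg)

lemma finite_XS: "finite (XS K L)"
  unfolding XS_def by (auto intro: finite_PiE)

lemma XS_nonempty: "0 < K \<Longrightarrow> XS K L \<noteq> {}"
  unfolding XS_def by (simp add: PiE_eq_empty_iff)

lemma XS_memD: "x \<in> XS K L \<Longrightarrow> l < L \<Longrightarrow> x l \<in> {1..K}"
  using PiE_mem[of x "{..<L}" "\<lambda>_. {1..K}" l] unfolding XS_def by simp

lemma XS_eqI:
  assumes "x \<in> XS K L" and "y \<in> XS K L" and "\<And>l. l < L \<Longrightarrow> x l = y l"
  shows "x = y"
  using assms(1,2) unfolding XS_def by (rule PiE_ext) (simp add: assms(3))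

lemma qf_same_time:
  assumes "\<alpha> t \<noteq> 0" and x: "x \<in> XS K L" and y: "y \<in> XS K L"
  shows "qf K L \<alpha> t t x y = (if x = y then 1 else 0)"
proof -
  have "qf K L \<alpha> t t x y = (\<Prod>l<L. if x l = y l then 1 else 0)"
    unfolding qf_def using assms(1) by (simp add: cat_1)
  also have "\<dots> = (if x = y then 1 else 0)"
  proof (cases "x = y")
    case False
    then obtain l where "l < L" "x l \<noteq> y l" using XS_eqI[OF x y] by blast
    then show ?thesis by (auto intro: prod_zero)
  qed simp
  finally show ?thesis .
qed

lemma qf_chapman_kolmogorov:
  assumes "\<alpha> s \<noteq> 0" and x: "x \<in> XS K L" and y: "y \<in> XS K L"
  shows "(\<Sum>z\<in>XS K L. qf K L \<alpha> t s x z * qf K L \<alpha> s r z y) = qf K L \<alpha> t r x y"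
proof -
  have "(\<Sum>z\<in>XS K L. qf K L \<alpha> t s x z * qf K L \<alpha> s r z y) =
      (\<Sum>z\<in>XS K L. \<Prod>l<L. cat K (\<alpha> t / \<alpha> s) (x l) (z l) * cat K (\<alpha> s / \<alpha> r) (z l) (y l))"
    unfolding qf_def by (simp add: prod.distrib)
  also have "\<dots> = (\<Prod>l<L. \<Sum>v\<in>{1..K}. cat K (\<alpha> t / \<alpha> s) (x l) v * cat K (\<alpha> s / \<alpha> r) v (y l))"
    unfolding XS_def by (rule prod_sum_PiE[symmetric]) auto
  also have "\<dots> = (\<Prod>l<L. cat K (\<alpha> t / \<alpha> r) (x l) (y l))"
  proof (rule prod.cong[OF refl])
    fix l assume "l \<in> {..<L}"
    then show "(\<Sum>v\<in>{1..K}. cat K (\<alpha> t / \<alpha> s) (x l) v * cat K (\<alpha> s / \<alpha> r) v (y l)) =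
        cat K (\<alpha> t / \<alpha> r) (x l) (y l)"
      using sum_cat_mult[OF XS_memD[OF x] XS_memD[OF y]] assms(1) by simp
  qed
  finally show ?thesis unfolding qf_def .
qed

lemma qtau_measurable[measurable]: "(\<lambda>\<tau>. qtau K L t x y \<tau>) \<in> borel_measurable (lebL L)"
  unfolding qtau_def lebL_def by measurable

lemma space_lebL_nonempty: "space (lebL L) \<noteq> {}"
  unfolding lebL_def space_PiM PiE_eq_empty_iff by simp

section \<open>The noise schedule and transition times\<close>

locale noise_schedule =
  fixes \<alpha> \<alpha>' :: "real \<Rightarrow> real"
  assumes alpha_deriv: "\<forall>s\<in>{0..1}. (\<alpha> has_real_derivative \<alpha>' s) (at s within {0..1})"
    and alpha'_cont: "continuous_on {0..1} \<alpha>'"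
    and alpha_decr: "\<forall>s\<in>{0..1}. \<forall>t\<in>{0..1}. s < t \<longrightarrow> \<alpha> t < \<alpha> s"
    and alpha_0: "\<alpha> 0 = 1" and alpha_1: "\<alpha> 1 = 0"
begin

lemma alpha_antimono: "s \<in> {0..1} \<Longrightarrow> t \<in> {0..1} \<Longrightarrow> s \<le> t \<Longrightarrow> \<alpha> t \<le> \<alpha> s"
  using alpha_decr by (cases "s = t") (auto simp: less_eq_real_def)

lemma alpha_pos: "s \<in> {0..1} \<Longrightarrow> s < 1 \<Longrightarrow> 0 < \<alpha> s"
  using alpha_decr alpha_1 by force

lemma alpha_nonneg: "s \<in> {0..1} \<Longrightarrow> 0 \<le> \<alpha> s"
  using alpha_antimono[of s 1] alpha_1 by simp

lemma alpha_le_1: "s \<in> {0..1} \<Longrightarrow> \<alpha> s \<le> 1"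
  using alpha_antimono[of 0 s] alpha_0 by simp

lemma alpha'_nonpos:
  assumes s: "s \<in> {0..1}"
  shows "\<alpha>' s \<le> 0"
proof -
  have "((\<lambda>y. (\<alpha> y - \<alpha> s) / (y - s)) \<longlongrightarrow> \<alpha>' s) (at s within {0..1})"
    using alpha_deriv s by (simp add: has_field_derivative_iff)
  moreover have "\<forall>\<^sub>F y in at s within {0..1}. (\<alpha> y - \<alpha> s) / (y - s) \<le> 0"
    unfolding eventually_at_filter
  proof (intro always_eventually allI impI)
    fix y assume y: "y \<noteq> s" "y \<in> {0..1}"
    then consider "y < s" "\<alpha> s < \<alpha> y" | "s < y" "\<alpha> y < \<alpha> s"
      using alpha_decr s by (meson linorder_neqE_linordered_idom)
    then show "(\<alpha> y - \<alpha> s) / (y - s) \<le> 0"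
      by cases (simp_all add: divide_nonneg_neg divide_nonpos_pos)
  qed
  moreover have "at s within {0..1} \<noteq> (bot :: real filter)"
  proof -
    consider "s = 0" | "s = 1" | "0 < s \<and> s < 1" using s by force
    then show ?thesis
      by cases (simp_all add: at_within_Icc_at_right at_within_Icc_at_left at_within_Icc_at)
  qed
  ultimately show ?thesis by (rule tendsto_upperbound)
qed

lemma qf_nonneg:
  assumes "s \<in> {0..1}" "t \<in> {0..1}" "s \<le> t" "s < 1"
  shows "0 \<le> qf K L \<alpha> t s x y"
proof -
  have "0 \<le> \<alpha> t / \<alpha> s" "\<alpha> t / \<alpha> s \<le> 1"
    using assms alpha_antimono alpha_nonneg alpha_pos by auto
  then show ?thesis unfolding qf_def by (auto intro!: prod_nonneg cat_nonneg)
qed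

lemma qf_pos:
  assumes "0 < K" "s \<in> {0..1}" "t \<in> {0..1}" "s < t"
  shows "0 < qf K L \<alpha> t s x y"
proof -
  have "0 \<le> \<alpha> t / \<alpha> s" "\<alpha> t / \<alpha> s < 1"
    using assms alpha_decr alpha_nonneg alpha_pos[of s] by auto
  then show ?thesis unfolding qf_def using assms(1) by (auto intro!: prod_pos cat_pos)
qed

definition transition_time_density :: "real \<Rightarrow> real" where
  "transition_time_density r = indicator {0..1} r * - \<alpha>' r"

lemma transition_time_density_measurable[measurable]:
  "transition_time_density \<in> borel_measurable borel"
proof -
  have "(\<lambda>r. indicator {0..1::real} r *\<^sub>R - \<alpha>' r) \<in> borel_measurable borel"
    by (rule borel_measurable_continuous_on_indicator) (auto intro: continuous_intros alpha'_cont)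
  then show ?thesis unfolding transition_time_density_def by simp
qed

lemma transition_time_density_nonneg: "0 \<le> transition_time_density r"
  unfolding transition_time_density_def using alpha'_nonpos[of r] by (simp add: indicator_def)

lemma nn_integral_transition_time_density_interval:
  assumes "0 \<le> a" "a \<le> b" "b \<le> 1"
  shows "(\<integral>\<^sup>+r. ennreal (transition_time_density r) * indicator {a..b} r \<partial>lborel) = ennreal (\<alpha> a - \<alpha> b)"
proof -
  have "((\<lambda>r. - \<alpha>' r) has_integral (- \<alpha> b - - \<alpha> a)) {a..b}"
  proof (rule fundamental_theorem_of_calculus)
    fix x assume x: "x \<in> {a..b}"
    then have "(\<alpha> has_real_derivative \<alpha>' x) (at x within {0..1})"
      using alpha_deriv assms by auto
    then have "(\<alpha> has_real_derivative \<alpha>' x) (at x within {a..b})"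
      by (rule has_field_derivative_subset) (use assms in auto)
    then have "((\<lambda>r. - \<alpha> r) has_real_derivative - \<alpha>' x) (at x within {a..b})"
      by (rule DERIV_minus)
    then show "((\<lambda>r. - \<alpha> r) has_vector_derivative - \<alpha>' x) (at x within {a..b})"
      by (simp add: has_real_derivative_iff_has_vector_derivative)
  qed (use assms in simp)
  then have "(\<integral>\<^sup>+r. ennreal (- \<alpha>' r) * indicator {a..b} r \<partial>lborel) = ennreal (\<alpha> a - \<alpha> b)"
    by (intro nn_integral_has_integral_lebesgue') (use alpha'_nonpos assms in auto)
  moreover have "ennreal (transition_time_density r) * indicator {a..b} r =
      ennreal (- \<alpha>' r) * indicator {a..b} r" for r
    using assms by (auto simp: transition_time_density_def indicator_def)
  ultimately show ?thesis by simp
qed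

text \<open>One coordinate of \<open>q_{s|0}(x | x0) = \<integral> j(\<tau>) q_{s|0}(x | x0, \<tau>) d\<tau>\<close>: the token is kept
  with probability \<open>P(\<tau> > s) = \<alpha> s\<close> and resampled uniformly otherwise.\<close>
lemma nn_integral_transition_time_cat:
  assumes s: "s \<in> {0..1}"
  shows "(\<integral>\<^sup>+r. ennreal (transition_time_density r * cat K (if s < r then 1 else 0) u v) \<partial>lborel) =
    ennreal (cat K (\<alpha> s) u v)"
proof -
  let ?\<rho> = "transition_time_density"
  define c1 where "c1 = cat K 1 u v"
  define c0 where "c0 = cat K 0 u v"
  have c: "0 \<le> c0" "0 \<le> c1" unfolding c0_def c1_def by (auto intro: cat_nonneg)
  have split: "ennreal (?\<rho> r * cat K (if s < r then 1 else 0) u v) =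
      ennreal c1 * (ennreal (?\<rho> r) * indicator {s<..1} r) + ennreal c0 * (ennreal (?\<rho> r) * indicator {0..s} r)" for r
    using s c transition_time_density_nonneg[of r]
    by (cases "s < r") (auto simp: indicator_def c0_def c1_def transition_time_density_def
        ennreal_mult[symmetric] mult.commute)
  have "(\<integral>\<^sup>+r. ennreal (?\<rho> r) * indicator {s<..1} r \<partial>lborel) =
      (\<integral>\<^sup>+r. ennreal (?\<rho> r) * indicator {s..1} r \<partial>lborel)"
    by (rule nn_integral_cong_AE)
       (use AE_lborel_singleton[of s] in \<open>auto elim!: eventually_mono simp: indicator_def\<close>)
  also have "\<dots> = ennreal (\<alpha> s)"
    using s alpha_1 nn_integral_transition_time_density_interval[of s 1] by simp
  finally have kept: "(\<integral>\<^sup>+r. ennreal (?\<rho> r) * indicator {s<..1} r \<partial>lborel) = ennreal (\<alpha> s)" .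
  have resampled: "(\<integral>\<^sup>+r. ennreal (?\<rho> r) * indicator {0..s} r \<partial>lborel) = ennreal (1 - \<alpha> s)"
    using nn_integral_transition_time_density_interval[of 0 s] s alpha_0 by simp
  have "(\<integral>\<^sup>+r. ennreal (?\<rho> r * cat K (if s < r then 1 else 0) u v) \<partial>lborel) =
      ennreal c1 * ennreal (\<alpha> s) + ennreal c0 * ennreal (1 - \<alpha> s)"
    unfolding split by (subst nn_integral_add) (auto simp: nn_integral_cmult kept resampled)
  also have "\<dots> = ennreal (c1 * \<alpha> s + c0 * (1 - \<alpha> s))"
    using c alpha_nonneg[OF s] alpha_le_1[OF s] by (simp add: ennreal_mult'' ennreal_plus)
  also have "c1 * \<alpha> s + c0 * (1 - \<alpha> s) = cat K (\<alpha> s) u v"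
    unfolding c1_def c0_def cat_def by (simp add: algebra_simps)
  finally show ?thesis .
qed

lemma jden_eq_prod: "jden L \<alpha>' \<tau> = (\<Prod>l<L. transition_time_density (\<tau> l))"
  unfolding jden_def transition_time_density_def by (simp add: mult.commute)

lemma jden_measurable[measurable]: "(\<lambda>\<tau>. jden L \<alpha>' \<tau>) \<in> borel_measurable (lebL L)"
  unfolding jden_eq_prod lebL_def by measurable

lemma jden_nonneg: "0 \<le> jden L \<alpha>' \<tau>"
  unfolding jden_eq_prod by (auto intro: prod_nonneg transition_time_density_nonneg)

lemma nn_integral_jden_qtau:
  assumes s: "s \<in> {0..1}"
  shows "(\<integral>\<^sup>+\<tau>. ennreal (jden L \<alpha>' \<tau> * qtau K L s x y \<tau>) \<partial>lebL L) = ennreal (qf K L \<alpha> s 0 x y)"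
proof -
  interpret product_sigma_finite "\<lambda>_::nat. lborel :: real measure" by standard
  let ?f = "\<lambda>l r. transition_time_density r * cat K (if s < r then 1 else 0) (x l) (y l)"
  have f_nonneg: "0 \<le> ?f l r" for l r
    by (auto intro!: mult_nonneg_nonneg cat_nonneg transition_time_density_nonneg)
  have "jden L \<alpha>' \<tau> * qtau K L s x y \<tau> = (\<Prod>l<L. ?f l (\<tau> l))" for \<tau>
    unfolding jden_eq_prod qtau_def prod.distrib[symmetric] by (intro prod.cong) auto
  then have "(\<integral>\<^sup>+\<tau>. ennreal (jden L \<alpha>' \<tau> * qtau K L s x y \<tau>) \<partial>lebL L) =
      (\<integral>\<^sup>+\<tau>. (\<Prod>l<L. ennreal (?f l (\<tau> l))) \<partial>lebL L)"
    by (simp add: prod_ennreal f_nonneg)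
  also have "\<dots> = (\<Prod>l<L. \<integral>\<^sup>+r. ennreal (?f l r) \<partial>lborel)"
    unfolding lebL_def by (rule product_nn_integral_prod) auto
  also have "\<dots> = (\<Prod>l<L. ennreal (cat K (\<alpha> s) (x l) (y l)))"
    using nn_integral_transition_time_cat[OF s] by simp
  also have "\<dots> = ennreal (qf K L \<alpha> s 0 x y)"
    unfolding qf_def alpha_0 using alpha_nonneg[OF s] alpha_le_1[OF s]
    by (simp add: prod_ennreal cat_nonneg)
  finally show ?thesis .
qed

lemma jres_measurable[measurable]: "(\<lambda>\<tau>. jres K L \<alpha> \<alpha>' s y z \<tau>) \<in> borel_measurable (lebL L)"
  unfolding jres_def by measurable

lemma jres_nonneg: "s \<in> {0..1} \<Longrightarrow> s < 1 \<Longrightarrow> 0 \<le> jres K L \<alpha> \<alpha>' s y z \<tau>"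
  unfolding jres_def
  by (auto intro!: divide_nonneg_nonneg mult_nonneg_nonneg jden_nonneg qtau_nonneg qf_nonneg)

lemma subprob_space_jres:
  assumes s: "s \<in> {0..1}" "s < 1"
  shows "subprob_space (density (lebL L) (\<lambda>\<tau>. ennreal (jres K L \<alpha> \<alpha>' s y z \<tau>)))"
proof (rule subprob_spaceI)
  define c where "c = qf K L \<alpha> s 0 z y"
  have c: "0 \<le> c" unfolding c_def using s by (intro qf_nonneg) auto
  have "(\<integral>\<^sup>+\<tau>. ennreal (jres K L \<alpha> \<alpha>' s y z \<tau>) \<partial>lebL L) =
      (\<integral>\<^sup>+\<tau>. ennreal (jden L \<alpha>' \<tau> * qtau K L s z y \<tau>) * ennreal (1 / c) \<partial>lebL L)"
    unfolding jres_def c_def[symmetric] using c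
    by (intro nn_integral_cong) (simp add: ennreal_mult''[symmetric])
  also have "\<dots> = ennreal c * ennreal (1 / c)"
    by (simp add: nn_integral_multc nn_integral_jden_qtau[OF s(1)] c_def)
  also have "\<dots> \<le> 1"
    using c by (cases "c = 0") (simp_all add: ennreal_mult''[symmetric])
  finally show "emeasure (density (lebL L) (\<lambda>\<tau>. ennreal (jres K L \<alpha> \<alpha>' s y z \<tau>)))
      (space (density (lebL L) (\<lambda>\<tau>. ennreal (jres K L \<alpha> \<alpha>' s y z \<tau>)))) \<le> 1"
    by (simp add: emeasure_density cong: nn_integral_cong)
qed (simp add: space_lebL_nonempty)

end

section \<open>Marginals and the forward joint density\<close>

locale udm_setting = noise_schedule +
  fixes K L n :: nat and p0 :: "(nat \<Rightarrow> nat) \<Rightarrow> real" and tg :: "nat \<Rightarrow> real"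
  assumes K_pos: "0 < K"
    and p0_nonneg: "\<forall>x\<in>XS K L. 0 \<le> p0 x" and p0_sum: "(\<Sum>x\<in>XS K L. p0 x) = 1"
    and tg_0: "tg 0 = 0" and tg_n: "tg n = 1" and tg_step: "\<forall>i<n. tg i < tg (Suc i)"
begin

lemma tg_strict_mono: "i < j \<Longrightarrow> j \<le> n \<Longrightarrow> tg i < tg j"
proof (induction j)
  case (Suc j)
  have "tg j < tg (Suc j)" using tg_step Suc.prems by simp
  then show ?case using Suc by (cases "i = j") auto
qed simp

lemma tg_mem: "i \<le> n \<Longrightarrow> tg i \<in> {0..1}"
  using tg_strict_mono[of 0 i] tg_strict_mono[of i n] tg_0 tg_n
  by (cases "i = 0"; cases "i = n") auto

lemma tg_pos: "0 < i \<Longrightarrow> i \<le> n \<Longrightarrow> 0 < tg i"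
  using tg_strict_mono[of 0 i] tg_0 by simp

lemma tg_less_1: "i < n \<Longrightarrow> tg i < 1"
  using tg_strict_mono[of i n] tg_n by simp

lemma pmarg_pos:
  assumes t: "0 < t" "t \<le> 1"
  shows "0 < pmarg K L p0 \<alpha> t x"
proof -
  obtain y where y: "y \<in> XS K L" "0 < p0 y"
    using p0_sum p0_nonneg by (metis less_eq_real_def sum.neutral zero_neq_one)
  have "0 < p0 y * qf K L \<alpha> t 0 x y" using y t K_pos by (intro mult_pos_pos qf_pos) auto
  also have "\<dots> \<le> pmarg K L p0 \<alpha> t x"
    unfolding pmarg_def using p0_nonneg t
    by (intro member_le_sum[OF y(1) _ finite_XS]) (auto intro!: mult_nonneg_nonneg qf_nonneg)
  finally show ?thesis .
qed

lemma pmarg_0: "y \<in> XS K L \<Longrightarrow> pmarg K L p0 \<alpha> 0 y = p0 y"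
  unfolding pmarg_def using alpha_0
  by (simp add: qf_same_time if_distrib sum.delta finite_XS cong: if_cong)

lemma pmarg_mult_prev:
  "0 < t \<Longrightarrow> t \<le> 1 \<Longrightarrow> pmarg K L p0 \<alpha> t x * prev K L p0 \<alpha> s t z x = pmarg K L p0 \<alpha> s z * qf K L \<alpha> t s x z"
  unfolding prev_def using pmarg_pos[of t x] by simp

text \<open>This is \<open>V_t\<close> of the proof idea: the density of the forward pair \<open>(X_t, \<tau>)\<close>, from which
  \<open>jcond\<close> and \<open>p0cond\<close> arise by Bayes' rule.\<close>
definition joint_density :: "real \<Rightarrow> (nat \<Rightarrow> nat) \<Rightarrow> (nat \<Rightarrow> real) \<Rightarrow> real" where
  "joint_density t x \<tau> = jden L \<alpha>' \<tau> * (\<Sum>x0\<in>XS K L. p0 x0 * qtau K L t x x0 \<tau>)"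

lemma joint_density_measurable[measurable]: "(\<lambda>\<tau>. joint_density t x \<tau>) \<in> borel_measurable (lebL L)"
  unfolding joint_density_def by measurable

lemma joint_density_nonneg: "0 \<le> joint_density t x \<tau>"
  unfolding joint_density_def using p0_nonneg
  by (auto intro!: mult_nonneg_nonneg sum_nonneg jden_nonneg qtau_nonneg)

lemma ennreal_joint_density:
  "ennreal (joint_density t x \<tau>) = (\<Sum>x0\<in>XS K L. ennreal (p0 x0 * (jden L \<alpha>' \<tau> * qtau K L t x x0 \<tau>)))"
proof -
  have "joint_density t x \<tau> = (\<Sum>x0\<in>XS K L. p0 x0 * (jden L \<alpha>' \<tau> * qtau K L t x x0 \<tau>))"
    unfolding joint_density_def sum_distrib_left by (simp add: algebra_simps)
  then show ?thesis
    using p0_nonneg by (simp add: sum_ennreal jden_nonneg qtau_nonneg)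
qed

lemma nn_integral_joint_density:
  assumes "t \<in> {0..1}"
  shows "(\<integral>\<^sup>+\<tau>. ennreal (joint_density t x \<tau>) \<partial>lebL L) = ennreal (pmarg K L p0 \<alpha> t x)"
proof -
  have "(\<integral>\<^sup>+\<tau>. ennreal (joint_density t x \<tau>) \<partial>lebL L) =
      (\<Sum>x0\<in>XS K L. ennreal (p0 x0) * \<integral>\<^sup>+\<tau>. ennreal (jden L \<alpha>' \<tau> * qtau K L t x x0 \<tau>) \<partial>lebL L)"
    unfolding ennreal_joint_density using p0_nonneg
    by (subst nn_integral_sum) (auto simp: ennreal_mult jden_nonneg qtau_nonneg nn_integral_cmult)
  also have "\<dots> = ennreal (pmarg K L p0 \<alpha> t x)"
    unfolding pmarg_def nn_integral_jden_qtau[OF assms] using p0_nonneg assms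
    by (subst sum_ennreal[symmetric]) (auto intro!: sum.cong mult_nonneg_nonneg qf_nonneg simp: ennreal_mult')
  finally show ?thesis .
qed

lemma joint_density_mult_p0cond:
  assumes y: "y \<in> XS K L"
  shows "joint_density t x \<tau> * p0cond K L p0 t x \<tau> y = p0 y * (jden L \<alpha>' \<tau> * qtau K L t x y \<tau>)"
proof (cases "(\<Sum>x0\<in>XS K L. p0 x0 * qtau K L t x x0 \<tau>) = 0")
  case True
  then have "p0 y * qtau K L t x y \<tau> = 0"
    using p0_nonneg y by (subst (asm) sum_nonneg_eq_0_iff) (auto simp: finite_XS qtau_nonneg)
  then show ?thesis unfolding joint_density_def p0cond_def using True by auto
next
  case False
  then show ?thesis unfolding joint_density_def p0cond_def by (simp add: field_simps)
qed

lemma p0cond_measurable[measurable]: "(\<lambda>\<tau>. p0cond K L p0 t x \<tau> y) \<in> borel_measurable (lebL L)"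
  unfolding p0cond_def by measurable

lemma p0cond_nonneg: "y \<in> XS K L \<Longrightarrow> 0 \<le> p0cond K L p0 t x \<tau> y"
  unfolding p0cond_def using p0_nonneg
  by (auto intro!: divide_nonneg_nonneg mult_nonneg_nonneg sum_nonneg qtau_nonneg)

lemma sum_p0cond_le_1: "(\<Sum>y\<in>XS K L. p0cond K L p0 t x \<tau> y) \<le> 1"
  unfolding p0cond_def sum_divide_distrib[symmetric] by (simp add: divide_le_eq_1)

lemma nn_integral_joint_density_p0cond:
  assumes t: "t \<in> {0..1}"
  shows "(\<integral>\<^sup>+\<tau>. ennreal (joint_density t x \<tau>) * (\<Sum>y\<in>XS K L. ennreal (p0cond K L p0 t x \<tau> y) * C y) \<partial>lebL L) =
    (\<Sum>y\<in>XS K L. ennreal (p0 y * qf K L \<alpha> t 0 x y) * C y)"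
proof -
  have "ennreal (joint_density t x \<tau>) * (\<Sum>y\<in>XS K L. ennreal (p0cond K L p0 t x \<tau> y) * C y) =
      (\<Sum>y\<in>XS K L. ennreal (p0 y) * ennreal (jden L \<alpha>' \<tau> * qtau K L t x y \<tau>) * C y)" for \<tau>
    unfolding sum_distrib_left
    by (intro sum.cong refl)
       (simp add: mult.assoc[symmetric] ennreal_mult[symmetric] joint_density_nonneg p0cond_nonneg
         joint_density_mult_p0cond p0_nonneg jden_nonneg qtau_nonneg)
  then show ?thesis
    using t p0_nonneg
    by (simp add: nn_integral_sum nn_integral_cmult nn_integral_multc nn_integral_jden_qtau
        ennreal_mult qf_nonneg)
qed

lemma jcond_eq: "jcond K L p0 \<alpha> \<alpha>' t x \<tau> = joint_density t x \<tau> / pmarg K L p0 \<alpha> t x"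
  unfolding jcond_def joint_density_def ..

lemma jcond_measurable[measurable]: "(\<lambda>\<tau>. jcond K L p0 \<alpha> \<alpha>' t x \<tau>) \<in> borel_measurable (lebL L)"
  unfolding jcond_eq by measurable

lemma pmarg_mult_nn_integral_jcond:
  assumes "0 < t" "t \<le> 1" and [measurable]: "f \<in> borel_measurable (lebL L)"
  shows "ennreal (pmarg K L p0 \<alpha> t x) * (\<integral>\<^sup>+\<tau>. ennreal (jcond K L p0 \<alpha> \<alpha>' t x \<tau>) * f \<tau> \<partial>lebL L) =
    (\<integral>\<^sup>+\<tau>. ennreal (joint_density t x \<tau>) * f \<tau> \<partial>lebL L)"
proof -
  have p: "0 < pmarg K L p0 \<alpha> t x" using pmarg_pos assms by blast
  have "ennreal (pmarg K L p0 \<alpha> t x) * ennreal (jcond K L p0 \<alpha> \<alpha>' t x \<tau>) = ennreal (joint_density t x \<tau>)" for \<tau>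
    using p by (simp add: jcond_eq ennreal_mult[symmetric] joint_density_nonneg)
  then show ?thesis
    by (subst nn_integral_cmult[symmetric]) (simp_all add: mult.assoc[symmetric] jcond_eq)
qed

lemma subprob_space_jcond:
  assumes "0 < t" "t \<le> 1"
  shows "subprob_space (density (lebL L) (\<lambda>\<tau>. ennreal (jcond K L p0 \<alpha> \<alpha>' t x \<tau>)))"
proof (rule subprob_spaceI)
  have "ennreal (pmarg K L p0 \<alpha> t x) * (\<integral>\<^sup>+\<tau>. ennreal (jcond K L p0 \<alpha> \<alpha>' t x \<tau>) * 1 \<partial>lebL L) =
      ennreal (pmarg K L p0 \<alpha> t x) * 1"
    using pmarg_mult_nn_integral_jcond[OF assms, of "\<lambda>_. 1"] nn_integral_joint_density[of t x] assms by simp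
  then have "(\<integral>\<^sup>+\<tau>. ennreal (jcond K L p0 \<alpha> \<alpha>' t x \<tau>) * 1 \<partial>lebL L) = 1"
    using pmarg_pos[OF assms, of x] by (subst (asm) ennreal_mult_cancel_left) auto
  then show "emeasure (density (lebL L) (\<lambda>\<tau>. ennreal (jcond K L p0 \<alpha> \<alpha>' t x \<tau>)))
      (space (density (lebL L) (\<lambda>\<tau>. ennreal (jcond K L p0 \<alpha> \<alpha>' t x \<tau>)))) \<le> 1"
    by (simp add: emeasure_density cong: nn_integral_cong)
qed (simp add: space_lebL_nonempty)

section \<open>The resampling chain\<close>

lemma bridge_nonneg:
  assumes "0 \<le> s" "s < t" "t \<le> 1"
  shows "0 \<le> bridge K L \<alpha> s t y x z"
  unfolding bridge_def using assms
  by (auto intro!: divide_nonneg_nonneg mult_nonneg_nonneg qf_nonneg)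

lemma qf_mult_bridge:
  assumes "0 \<le> s" "s < t" "t \<le> 1" and x: "x \<in> XS K L" and y: "y \<in> XS K L" and z: "z \<in> XS K L"
  shows "qf K L \<alpha> t 0 x y * bridge K L \<alpha> s t y x z = qf K L \<alpha> t s x z * qf K L \<alpha> s 0 z y"
proof (cases "s = 0")
  case True
  then show ?thesis
    unfolding bridge_def using qf_same_time[OF _ z y] alpha_0 by auto
next
  case False
  have "0 < qf K L \<alpha> t 0 x y" using assms K_pos by (intro qf_pos) auto
  then show ?thesis unfolding bridge_def using False by simp
qed

lemma sum_bridge:
  assumes "0 \<le> s" "s < t" "t \<le> 1" and x: "x \<in> XS K L" and y: "y \<in> XS K L"
  shows "(\<Sum>z\<in>XS K L. bridge K L \<alpha> s t y x z) = 1"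
proof -
  have q: "0 < qf K L \<alpha> t 0 x y" using assms K_pos by (intro qf_pos) auto
  have "qf K L \<alpha> t 0 x y * (\<Sum>z\<in>XS K L. bridge K L \<alpha> s t y x z) =
      (\<Sum>z\<in>XS K L. qf K L \<alpha> t s x z * qf K L \<alpha> s 0 z y)"
    unfolding sum_distrib_left using assms by (intro sum.cong refl qf_mult_bridge) auto
  also have "\<dots> = qf K L \<alpha> t 0 x y"
    using assms alpha_pos[of s] by (intro qf_chapman_kolmogorov) auto
  finally show ?thesis using q by simp
qed

lemma qf_mult_bridge_mult_jres:
  assumes "0 < s" "s < t" "t \<le> 1" and x: "x \<in> XS K L" and y: "y \<in> XS K L" and z: "z \<in> XS K L"
  shows "qf K L \<alpha> t 0 x y * bridge K L \<alpha> s t y x z * jres K L \<alpha> \<alpha>' s y z \<tau> =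
    qf K L \<alpha> t s x z * (jden L \<alpha>' \<tau> * qtau K L s z y \<tau>)"
proof -
  have "0 < qf K L \<alpha> s 0 z y" using assms K_pos by (intro qf_pos) auto
  then have "qf K L \<alpha> s 0 z y * jres K L \<alpha> \<alpha>' s y z \<tau> = jden L \<alpha>' \<tau> * qtau K L s z y \<tau>"
    unfolding jres_def by simp
  then show ?thesis
    using qf_mult_bridge[OF _ assms(2,3) x y z] assms(1) by (simp add: mult.assoc)
qed

definition paths :: "nat \<Rightarrow> (nat \<Rightarrow> nat) list set" where
  "paths i = {a. length a = Suc i \<and> set a \<subseteq> XS K L}"

lemma finite_paths: "finite (paths i)"
  unfolding paths_def using finite_lists_length_eq[OF finite_XS[of K L], of "Suc i"]
  by (simp add: conj_commute)

lemma snoc_in_paths_iff: "x \<in> XS K L \<Longrightarrow> a @ [x] \<in> paths (Suc i) \<longleftrightarrow> a \<in> paths i"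
  unfolding paths_def by auto

primrec run_density :: "nat \<Rightarrow> (nat \<Rightarrow> nat) \<Rightarrow> (nat \<Rightarrow> real) \<Rightarrow> (nat \<Rightarrow> nat) list \<Rightarrow> ennreal" where
  "run_density 0 x \<tau> a = (if a = [x] then 1 else 0)"
| "run_density (Suc i) x \<tau> a =
    (\<Sum>y\<in>XS K L. ennreal (p0cond K L p0 (tg (Suc i)) x \<tau> y) *
      (\<Sum>z\<in>XS K L. ennreal (bridge K L \<alpha> (tg i) (tg (Suc i)) y x z) *
        (\<integral>\<^sup>+\<tau>'. ennreal (jres K L \<alpha> \<alpha>' (tg i) y z \<tau>') *
          (if a \<noteq> [] \<and> last a = x then run_density i z \<tau>' (butlast a) else 0) \<partial>lebL L)))"

lemma run_density_measurable[measurable]: "(\<lambda>\<tau>. run_density i x \<tau> a) \<in> borel_measurable (lebL L)"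
  by (cases i) simp_all

lemma finite_subprob_density_run:
  assumes "x \<in> XS K L" and "i \<le> n"
  shows "finite_subprob_density (run K L p0 \<alpha> \<alpha>' tg i x \<tau>) (paths i) (run_density i x \<tau>)"
  using assms
proof (induction i arbitrary: x \<tau>)
  case 0
  have "{[x]} \<subseteq> paths 0" using 0 by (simp add: paths_def)
  with finite_subprob_density_return[of "[x]"] show ?case
    by (auto intro: finite_subprob_density_mono finite_paths)
next
  case (Suc i)
  let ?s = "tg i" and ?t = "tg (Suc i)"
  have st: "0 \<le> ?s" "?s < ?t" "?t \<le> 1" "?s < 1"
    using tg_mem[of i] tg_mem[of "Suc i"] tg_step tg_less_1 Suc.prems by auto
  define G where "G z \<tau>' a = (if a \<noteq> [] \<and> last a = x then run_density i z \<tau>' (butlast a) else 0)" for z \<tau>' a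
  define D1 where "D1 = density (count_space (XS K L)) (\<lambda>y. ennreal (p0cond K L p0 ?t x \<tau> y))"
  define D2 where "D2 y = density (count_space (XS K L)) (\<lambda>z. ennreal (bridge K L \<alpha> ?s ?t y x z))" for y
  define D3 where "D3 y z = density (lebL L) (\<lambda>\<tau>'. ennreal (jres K L \<alpha> \<alpha>' ?s y z \<tau>'))" for y z
  have G_measurable[measurable]: "(\<lambda>\<tau>'. G z \<tau>' a) \<in> borel_measurable (lebL L)" for z a
    unfolding G_def by measurable
  have snoc: "finite_subprob_density (distr (run K L p0 \<alpha> \<alpha>' tg i z \<tau>') (count_space UNIV) (\<lambda>l. l @ [x]))
      (paths (Suc i)) (G z \<tau>')" if "z \<in> XS K L" for z \<tau>'
    unfolding G_def
    by (rule finite_subprob_density_mono[OF finite_subprob_density_distr_snoc[OF Suc.IH]])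
       (use that Suc.prems in \<open>auto simp: snoc_in_paths_iff finite_paths\<close>)
  have XS_ne: "XS K L \<noteq> {}" using K_pos by (rule XS_nonempty)
  have "finite_subprob_density (run K L p0 \<alpha> \<alpha>' tg (Suc i) x \<tau>) (paths (Suc i))
      (\<lambda>a. \<integral>\<^sup>+y. \<integral>\<^sup>+z. \<integral>\<^sup>+\<tau>'. G z \<tau>' a \<partial>D3 y z \<partial>D2 y \<partial>D1)"
    unfolding run.simps D1_def D2_def D3_def
  proof (intro finite_subprob_density_bind)
    show "subprob_space (density (count_space (XS K L)) (\<lambda>y. ennreal (p0cond K L p0 ?t x \<tau> y)))"
      by (rule subprob_space_density_count_space[OF finite_XS XS_ne p0cond_nonneg sum_p0cond_le_1])
    show "subprob_space (density (count_space (XS K L)) (\<lambda>z. ennreal (bridge K L \<alpha> ?s ?t y x z)))"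
      if "y \<in> space (density (count_space (XS K L)) (\<lambda>y. ennreal (p0cond K L p0 ?t x \<tau> y)))" for y
      using that st Suc.prems
      by (intro subprob_space_density_count_space[OF finite_XS XS_ne bridge_nonneg]) (simp_all add: sum_bridge)
    show "subprob_space (density (lebL L) (\<lambda>\<tau>'. ennreal (jres K L \<alpha> \<alpha>' ?s y z \<tau>')))" for y z
      using st by (intro subprob_space_jres) auto
  qed (auto simp: snoc measurable_density_eq1)
  moreover have "(\<lambda>a. \<integral>\<^sup>+y. \<integral>\<^sup>+z. \<integral>\<^sup>+\<tau>'. G z \<tau>' a \<partial>D3 y z \<partial>D2 y \<partial>D1) = run_density (Suc i) x \<tau>"
    by (rule ext) (simp add: D1_def D2_def D3_def G_def nn_integral_density_count_space_finite[OF finite_XS]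
        nn_integral_density)
  ultimately show ?case by (simp only:)
qed

lemma nn_integral_bridge_jres:
  assumes st: "0 < s" "s < t" "t \<le> 1" and x: "x \<in> XS K L" and y: "y \<in> XS K L" and z: "z \<in> XS K L"
    and F[measurable]: "F \<in> borel_measurable (lebL L)"
  shows "ennreal (p0 y * qf K L \<alpha> t 0 x y) * (ennreal (bridge K L \<alpha> s t y x z) *
      (\<integral>\<^sup>+\<tau>. ennreal (jres K L \<alpha> \<alpha>' s y z \<tau>) * F \<tau> \<partial>lebL L)) =
    ennreal (qf K L \<alpha> t s x z) * (\<integral>\<^sup>+\<tau>. ennreal (p0 y * (jden L \<alpha>' \<tau> * qtau K L s z y \<tau>)) * F \<tau> \<partial>lebL L)"
proof -
  define c where "c = p0 y * qf K L \<alpha> t 0 x y * bridge K L \<alpha> s t y x z"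
  have c: "0 \<le> c" and jres: "0 \<le> jres K L \<alpha> \<alpha>' s y z \<tau>" and q: "0 \<le> qf K L \<alpha> t s x z" for \<tau>
    unfolding c_def using st p0_nonneg y by (auto intro!: mult_nonneg_nonneg qf_nonneg bridge_nonneg jres_nonneg)
  have "ennreal (p0 y * qf K L \<alpha> t 0 x y) * (ennreal (bridge K L \<alpha> s t y x z) *
      (\<integral>\<^sup>+\<tau>. ennreal (jres K L \<alpha> \<alpha>' s y z \<tau>) * F \<tau> \<partial>lebL L)) =
    ennreal c * (\<integral>\<^sup>+\<tau>. ennreal (jres K L \<alpha> \<alpha>' s y z \<tau>) * F \<tau> \<partial>lebL L)"
    unfolding c_def using st p0_nonneg y
    by (simp add: ennreal_mult mult.assoc mult_nonneg_nonneg qf_nonneg bridge_nonneg)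
  also have "\<dots> = (\<integral>\<^sup>+\<tau>. ennreal (c * jres K L \<alpha> \<alpha>' s y z \<tau>) * F \<tau> \<partial>lebL L)"
    by (subst nn_integral_cmult[symmetric]) (simp_all add: ennreal_mult c jres mult.assoc)
  also have "\<dots> = (\<integral>\<^sup>+\<tau>. ennreal (qf K L \<alpha> t s x z) *
      (ennreal (p0 y * (jden L \<alpha>' \<tau> * qtau K L s z y \<tau>)) * F \<tau>) \<partial>lebL L)"
    using qf_mult_bridge_mult_jres[OF st x y z] q p0_nonneg y unfolding c_def
    by (simp add: ennreal_mult jden_nonneg qtau_nonneg mult_ac)
  also have "\<dots> = ennreal (qf K L \<alpha> t s x z) *
      (\<integral>\<^sup>+\<tau>. ennreal (p0 y * (jden L \<alpha>' \<tau> * qtau K L s z y \<tau>)) * F \<tau> \<partial>lebL L)"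
    by (rule nn_integral_cmult) simp
  finally show ?thesis .
qed

lemma bridge_resampling_transport:
  assumes st: "0 < s" "s < t" "t \<le> 1" and x: "x \<in> XS K L"
    and F[measurable]: "\<And>z. F z \<in> borel_measurable (lebL L)"
  shows "(\<Sum>y\<in>XS K L. ennreal (p0 y * qf K L \<alpha> t 0 x y) *
      (\<Sum>z\<in>XS K L. ennreal (bridge K L \<alpha> s t y x z) *
        (\<integral>\<^sup>+\<tau>. ennreal (jres K L \<alpha> \<alpha>' s y z \<tau>) * F z \<tau> \<partial>lebL L))) =
    (\<Sum>z\<in>XS K L. ennreal (qf K L \<alpha> t s x z) * (\<integral>\<^sup>+\<tau>. ennreal (joint_density s z \<tau>) * F z \<tau> \<partial>lebL L))"
    (is "?lhs = ?rhs")
proof -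
  let ?w = "\<lambda>y z \<tau>. p0 y * (jden L \<alpha>' \<tau> * qtau K L s z y \<tau>)"
  have "?lhs = (\<Sum>y\<in>XS K L. \<Sum>z\<in>XS K L. ennreal (qf K L \<alpha> t s x z) *
      (\<integral>\<^sup>+\<tau>. ennreal (?w y z \<tau>) * F z \<tau> \<partial>lebL L))"
    unfolding sum_distrib_left using st x by (intro sum.cong refl nn_integral_bridge_jres) auto
  also have "\<dots> = (\<Sum>z\<in>XS K L. \<Sum>y\<in>XS K L. ennreal (qf K L \<alpha> t s x z) *
      (\<integral>\<^sup>+\<tau>. ennreal (?w y z \<tau>) * F z \<tau> \<partial>lebL L))"
    by (rule sum.swap)
  also have "\<dots> = ?rhs"
    unfolding sum_distrib_left[symmetric] ennreal_joint_density sum_distrib_right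
    by (intro sum.cong refl arg_cong[where f = "\<lambda>r. _ * r"] nn_integral_sum[symmetric]) simp
  finally show ?thesis .
qed

lemma resampling_step:
  assumes i: "i < n" and x: "x \<in> XS K L"
  shows "(\<Sum>y\<in>XS K L. ennreal (p0 y * qf K L \<alpha> (tg (Suc i)) 0 x y) *
      (\<Sum>z\<in>XS K L. ennreal (bridge K L \<alpha> (tg i) (tg (Suc i)) y x z) *
        (\<integral>\<^sup>+\<tau>. ennreal (jres K L \<alpha> \<alpha>' (tg i) y z \<tau>) * run_density i z \<tau> a \<partial>lebL L))) =
    (\<Sum>z\<in>XS K L. ennreal (qf K L \<alpha> (tg (Suc i)) (tg i) x z) *
      (\<integral>\<^sup>+\<tau>. ennreal (joint_density (tg i) z \<tau>) * run_density i z \<tau> a \<partial>lebL L))"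
proof (cases i)
  case 0
  text \<open>At time 0 the bridge is a point mass and the run has stopped.\<close>
  have "(\<Sum>z\<in>XS K L. ennreal (bridge K L \<alpha> 0 (tg (Suc 0)) y x z) *
        (\<integral>\<^sup>+\<tau>. ennreal (jres K L \<alpha> \<alpha>' 0 y z \<tau>) * run_density 0 z \<tau> a \<partial>lebL L)) =
      (if a = [y] then 1 else 0)" if y: "y \<in> XS K L" for y
  proof -
    have "(\<integral>\<^sup>+\<tau>. ennreal (jres K L \<alpha> \<alpha>' 0 y y \<tau>) \<partial>lebL L) = 1"
      using nn_integral_jden_qtau[where s = 0 and x = y and y = y] qf_same_time[OF _ y y] alpha_0 by (simp add: jres_def)
    then have "ennreal (bridge K L \<alpha> 0 (tg (Suc 0)) y x z) *
        (\<integral>\<^sup>+\<tau>. ennreal (jres K L \<alpha> \<alpha>' 0 y z \<tau>) * run_density 0 z \<tau> a \<partial>lebL L) =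
        (if z = y then (if a = [y] then 1 else 0) else 0)" for z
      by (auto simp: bridge_def nn_integral_multc)
    then show ?thesis
      using y by (simp add: sum.delta finite_XS)
  qed
  moreover have "(\<integral>\<^sup>+\<tau>. ennreal (joint_density 0 y \<tau>) * run_density 0 y \<tau> a \<partial>lebL L) =
      ennreal (p0 y) * (if a = [y] then 1 else 0)" if y: "y \<in> XS K L" for y
    using nn_integral_joint_density[of 0 y] pmarg_0[OF y] by (simp add: nn_integral_multc)
  ultimately show ?thesis
    using 0 tg_0 p0_nonneg by (intro sum.cong refl) (auto simp: ennreal_mult' mult.commute)
next
  case (Suc j)
  show ?thesis
    using tg_pos[of i] tg_step tg_mem[of "Suc i"] i x Suc
    by (intro bridge_resampling_transport) auto
qed

definition chain_weight :: "nat \<Rightarrow> (nat \<Rightarrow> nat) list \<Rightarrow> real" where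
  "chain_weight i a = (\<Prod>j\<in>{1..i}. prev K L p0 \<alpha> (tg (j - 1)) (tg j) (a ! (j - 1)) (a ! j))"

lemma chain_weight_snoc:
  assumes "length a = Suc i"
  shows "chain_weight (Suc i) (a @ [x]) = chain_weight i a * prev K L p0 \<alpha> (tg i) (tg (Suc i)) (last a) x"
proof -
  have "(\<Prod>j\<in>{1..i}. prev K L p0 \<alpha> (tg (j - 1)) (tg j) ((a @ [x]) ! (j - 1)) ((a @ [x]) ! j)) = chain_weight i a"
    unfolding chain_weight_def using assms by (intro prod.cong refl) (auto simp: nth_append)
  moreover have "(a @ [x]) ! i = last a"
    using assms by (cases a rule: rev_cases) (auto simp: nth_append)
  moreover have "(a @ [x]) ! Suc i = x"
    using assms by (simp add: nth_append)
  ultimately show ?thesis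
    unfolding chain_weight_def by (simp add: prod.cl_ivl_Suc)
qed

lemma pmarg_mult_chain_weight_snoc:
  assumes i: "i < n" and a: "a \<in> paths i"
  shows "pmarg K L p0 \<alpha> (tg (Suc i)) x * chain_weight (Suc i) (a @ [x]) =
    qf K L \<alpha> (tg (Suc i)) (tg i) x (last a) * (pmarg K L p0 \<alpha> (tg i) (last a) * chain_weight i a)"
proof -
  have "length a = Suc i" using a by (simp add: paths_def)
  then have "pmarg K L p0 \<alpha> (tg (Suc i)) x * chain_weight (Suc i) (a @ [x]) =
      (pmarg K L p0 \<alpha> (tg (Suc i)) x * prev K L p0 \<alpha> (tg i) (tg (Suc i)) (last a) x) * chain_weight i a"
    by (simp add: chain_weight_snoc mult_ac)
  also have "\<dots> = qf K L \<alpha> (tg (Suc i)) (tg i) x (last a) * (pmarg K L p0 \<alpha> (tg i) (last a) * chain_weight i a)"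
    using tg_pos[of "Suc i"] tg_mem[of "Suc i"] i by (simp add: pmarg_mult_prev mult_ac)
  finally show ?thesis .
qed

lemma sum_XS_last_path:
  "(\<Sum>x\<in>XS K L. ennreal (if a \<in> paths i \<and> last a = x then f x else 0)) =
    ennreal (if a \<in> paths i then f (last a) else 0)"
proof (cases "a \<in> paths i")
  case True
  then have "last a \<in> XS K L" by (cases a rule: rev_cases) (auto simp: paths_def)
  with True show ?thesis by (simp add: if_distrib sum.delta' finite_XS cong: if_cong)
qed simp

lemma nn_integral_joint_density_run_density:
  assumes "x \<in> XS K L" and "i \<le> n"
  shows "(\<integral>\<^sup>+\<tau>. ennreal (joint_density (tg i) x \<tau>) * run_density i x \<tau> a \<partial>lebL L) =
    ennreal (if a \<in> paths i \<and> last a = x then pmarg K L p0 \<alpha> (tg i) x * chain_weight i a else 0)"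
  using assms
proof (induction i arbitrary: x a)
  case 0
  have "a \<in> paths 0 \<and> last a = x \<longleftrightarrow> a = [x]"
    using 0 by (cases a) (auto simp: paths_def)
  then show ?case
    using nn_integral_joint_density[of "tg 0" x] tg_mem[of 0] by (simp add: chain_weight_def nn_integral_multc)
next
  case (Suc i)
  let ?s = "tg i" and ?t = "tg (Suc i)"
  have i: "i < n" and x: "x \<in> XS K L" using Suc.prems by auto
  have t: "?t \<in> {0..1}" using tg_mem Suc.prems by blast
  show ?case
  proof (cases "a \<noteq> [] \<and> last a = x")
    case False
    then show ?thesis by (auto simp: paths_def)
  next
    case True
    then obtain a' where a: "a = a' @ [x]" by (metis append_butlast_last_id)
    have "(\<integral>\<^sup>+\<tau>. ennreal (joint_density ?t x \<tau>) * run_density (Suc i) x \<tau> a \<partial>lebL L) =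
        (\<Sum>z\<in>XS K L. ennreal (qf K L \<alpha> ?t ?s x z) *
          (\<integral>\<^sup>+\<tau>. ennreal (joint_density ?s z \<tau>) * run_density i z \<tau> a' \<partial>lebL L))"
      unfolding run_density.simps nn_integral_joint_density_p0cond[OF t] resampling_step[OF i x, symmetric]
      using a by simp
    also have "\<dots> = (\<Sum>z\<in>XS K L. ennreal (if a' \<in> paths i \<and> last a' = z then
        qf K L \<alpha> ?t ?s x z * (pmarg K L p0 \<alpha> ?s z * chain_weight i a') else 0))"
      using Suc.IH i tg_mem[of i] tg_mem[of "Suc i"] tg_step tg_less_1[OF i]
      by (intro sum.cong refl) (auto simp: ennreal_mult'[symmetric] qf_nonneg)
    also have "\<dots> = ennreal (if a \<in> paths (Suc i) \<and> last a = x then pmarg K L p0 \<alpha> ?t x * chain_weight (Suc i) a else 0)"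
      unfolding sum_XS_last_path a using x pmarg_mult_chain_weight_snoc[OF i] by (simp add: snoc_in_paths_iff)
    finally show ?thesis .
  qed
qed

lemma proc_eq_revlaw: "proc K L p0 \<alpha> \<alpha>' tg n = revlaw K L p0 \<alpha> tg n"
proof -
  let ?D1 = "density (count_space (XS K L)) (\<lambda>x. ennreal (pmarg K L p0 \<alpha> 1 x))"
  let ?D2 = "\<lambda>x. density (lebL L) (\<lambda>\<tau>. ennreal (jcond K L p0 \<alpha> \<alpha>' 1 x \<tau>))"
  have run: "finite_subprob_density (bind (?D2 x) (run K L p0 \<alpha> \<alpha>' tg n x)) (paths n)
      (\<lambda>a. \<integral>\<^sup>+\<tau>. run_density n x \<tau> a \<partial>?D2 x)" if "x \<in> XS K L" for x
    by (rule finite_subprob_density_bind[OF subprob_space_jcond])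
       (simp_all add: that finite_subprob_density_run measurable_density_eq1)
  have "proc K L p0 \<alpha> \<alpha>' tg n = bind ?D1 (\<lambda>x. bind (?D2 x) (run K L p0 \<alpha> \<alpha>' tg n x))"
    unfolding proc_def tg_n by (simp add: eta_contract_eq)
  also have "\<dots> = density (count_space UNIV) (\<lambda>a. \<integral>\<^sup>+x. \<integral>\<^sup>+\<tau>. run_density n x \<tau> a \<partial>?D2 x \<partial>?D1)"
    by (rule bind_finite_subprob_density_eq[OF _ run]) (simp_all add: XS_nonempty K_pos)
  also have "\<dots> = revlaw K L p0 \<alpha> tg n"
    unfolding revlaw_def
  proof (intro arg_cong[where f = "density _"] ext)
    fix a
    have "(\<integral>\<^sup>+x. \<integral>\<^sup>+\<tau>. run_density n x \<tau> a \<partial>?D2 x \<partial>?D1) =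
        (\<Sum>x\<in>XS K L. \<integral>\<^sup>+\<tau>. ennreal (joint_density 1 x \<tau>) * run_density n x \<tau> a \<partial>lebL L)"
      by (simp add: nn_integral_density_count_space_finite[OF finite_XS] nn_integral_density
          pmarg_mult_nn_integral_jcond)
    also have "\<dots> = ennreal (if a \<in> paths n then pmarg K L p0 \<alpha> 1 (last a) * chain_weight n a else 0)"
      using nn_integral_joint_density_run_density[of _ n a] tg_n by (simp add: sum_XS_last_path)
    also have "\<dots> = (if length a = Suc n \<and> set a \<subseteq> XS K L
        then ennreal (pmarg K L p0 \<alpha> (tg n) (a ! n) *
          (\<Prod>i\<in>{1..n}. prev K L p0 \<alpha> (tg (i - 1)) (tg i) (a ! (i - 1)) (a ! i)))
        else 0)"
      by (cases "a = []") (auto simp: paths_def chain_weight_def tg_n last_conv_nth)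
    finally show "(\<integral>\<^sup>+x. \<integral>\<^sup>+\<tau>. run_density n x \<tau> a \<partial>?D2 x \<partial>?D1) = \<dots>" .
  qed
  finally show ?thesis .
qed

end

theorem mainTheorem10:
  fixes K L n :: nat and p0 :: "(nat \<Rightarrow> nat) \<Rightarrow> real"
    and \<alpha> \<alpha>' :: "real \<Rightarrow> real" and tg :: "nat \<Rightarrow> real"
  assumes "K \<ge> 2" and "L \<ge> 1"
    and "\<forall>x\<in>XS K L. p0 x \<ge> 0" and "(\<Sum>x\<in>XS K L. p0 x) = 1"
    and "\<forall>s\<in>{0..1}. (\<alpha> has_real_derivative \<alpha>' s) (at s within {0..1})"
    and "continuous_on {0..1} \<alpha>'"
    and "\<forall>s\<in>{0..1}. \<forall>t\<in>{0..1}. s < t \<longrightarrow> \<alpha> t < \<alpha> s"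
    and "\<alpha> 0 = 1" and "\<alpha> 1 = 0"
    and "n \<ge> 1" and "tg 0 = 0" and "tg n = 1" and "\<forall>i<n. tg i < tg (Suc i)"
  shows "proc K L p0 \<alpha> \<alpha>' tg n = revlaw K L p0 \<alpha> tg n"
proof -
  interpret udm_setting \<alpha> \<alpha>' K L n p0 tg
    using assms by unfold_locales auto
  show ?thesis by (rule proc_eq_revlaw)
qed

end
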